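(* Let $\mathcal{H}_A$ and $\mathcal{H}_B$ be complex Hilbert spaces, let $\hat A$ be a bounded Hermitian operator on $\mathcal{H}_A\otimes\mathcal{H}_B$, and let $g_0$, $|a_0,b_0\rangle$ be a solution of the separability eigenvalue equations of $\hat A$. Then: (1) For any orthonormal bases $\{|a_k\rangle\}_{k}$ of $\mathcal{H}_A$ and $\{|b_l\rangle\}_{l}$ of $\mathcal{H}_B$ which contain $|a_0\rangle$ and $|b_0\rangle$ respectively (with index $0$), one has $\hat A|a_0,b_0\rangle=g_0|a_0,b_0\rangle+\sum_{k\neq0,\,l\neq0}\psi_{k,l}|a_k,b_l\rangle$ for some coefficients $\psi_{k,l}\in\mathbb{C}$; that is, the coefficient of $|a_0,b_0\rangle$ is $g_0$ and the coefficients of $|a_k,b_0\rangle$ ($k\neq0$) and $|a_0,b_l\rangle$ ($l\neq0$) vanish. (2) If $g_1\neq g_0$ and $g_1$, $|a_1,b_0\rangle$ is another solution, then $\langle a_0|a_1\rangle=0$; likewise, if $g_1\neq g_0$ and $g_1$, $|a_0,b_1\rangle$ is another solution, then $\langle b_0|b_1\rangle=0$. (3) If $g_1\neq g_0$ and $g_1$, $|a_1,b_1\rangle$ is another solution, then $|a_0,b_0\rangle$ and $|a_1,b_1\rangle$ are linearly independent.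
   Context: Notation: $|a,b\rangle=|a\rangle\otimes|b\rangle$. For $|a\rangle\in\mathcal{H}_A$, $\hat A_a=\langle a|\hat A|a\rangle$ denotes the operator on $\mathcal{H}_B$ with $\langle b'|\hat A_a|b\rangle=\langle a,b'|\hat A|a,b\rangle$; for $|b\rangle\in\mathcal{H}_B$, $\hat A_b=\langle b|\hat A|b\rangle$ denotes the operator on $\mathcal{H}_A$ with $\langle a'|\hat A_b|a\rangle=\langle a',b|\hat A|a,b\rangle$. A solution of the separability eigenvalue equations of $\hat A$ is a real number $g$ together with unit vectors $|a\rangle\in\mathcal{H}_A$, $|b\rangle\in\mathcal{H}_B$ such that $\hat A_b|a\rangle=g|a\rangle$ and $\hat A_a|b\rangle=g|b\rangle$; it is written $g,|a,b\rangle$. *)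

theory Defs
  imports "HOL-Analysis.Analysis" "HOL-Library.Function_Algebras"
begin

text \<open>A complex Hilbert space is modelled (up to unitary isomorphism) as l2 over an
  index type: square-summable functions from the index type to the complex numbers.
  The tensor product of l2 over 'i and l2 over 'j is l2 over the pair type.\<close>

definition l2 :: "('i \<Rightarrow> complex) set" where
  "l2 = {x. (\<lambda>i. (cmod (x i))^2) summable_on UNIV}"

definition l2_inner :: "('i \<Rightarrow> complex) \<Rightarrow> ('i \<Rightarrow> complex) \<Rightarrow> complex" where
  "l2_inner x y = (\<Sum>\<^sub>\<infinity>i. cnj (x i) * y i)"

definition l2_norm :: "('i \<Rightarrow> complex) \<Rightarrow> real" where
  "l2_norm x = sqrt (\<Sum>\<^sub>\<infinity>i. (cmod (x i))^2)"

definition tensor :: "('i \<Rightarrow> complex) \<Rightarrow> ('j \<Rightarrow> complex) \<Rightarrow> ('i \<times> 'j \<Rightarrow> complex)" where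
  "tensor a b = (\<lambda>(i,j). a i * b j)"

text \<open>Bounded linear operator on l2 (only its behaviour on l2 matters).\<close>
definition bounded_op :: "(('i \<Rightarrow> complex) \<Rightarrow> ('i \<Rightarrow> complex)) \<Rightarrow> bool" where
  "bounded_op T \<longleftrightarrow>
     (\<forall>x\<in>l2. T x \<in> l2) \<and>
     (\<forall>x\<in>l2. \<forall>y\<in>l2. T (x + y) = T x + T y) \<and>
     (\<forall>c. \<forall>x\<in>l2. T (\<lambda>i. c * x i) = (\<lambda>i. c * T x i)) \<and>
     (\<exists>C. \<forall>x\<in>l2. l2_norm (T x) \<le> C * l2_norm x)"

definition hermitian_op :: "(('i \<Rightarrow> complex) \<Rightarrow> ('i \<Rightarrow> complex)) \<Rightarrow> bool" where
  "hermitian_op T \<longleftrightarrow> bounded_op T \<and>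
     (\<forall>x\<in>l2. \<forall>y\<in>l2. l2_inner (T x) y = l2_inner x (T y))"

text \<open>Partial expectation values: the operator A_b on H_A (applied to a) with
  matrix elements <a'|A_b|a> = <a',b|A|a,b>, and A_a on H_B (applied to b).\<close>
definition partial_B ::
  "(('i \<times> 'j \<Rightarrow> complex) \<Rightarrow> ('i \<times> 'j \<Rightarrow> complex)) \<Rightarrow> ('j \<Rightarrow> complex) \<Rightarrow> ('i \<Rightarrow> complex) \<Rightarrow> ('i \<Rightarrow> complex)" where
  "partial_B A b a = (\<lambda>i. \<Sum>\<^sub>\<infinity>j. cnj (b j) * A (tensor a b) (i, j))"

definition partial_A ::
  "(('i \<times> 'j \<Rightarrow> complex) \<Rightarrow> ('i \<times> 'j \<Rightarrow> complex)) \<Rightarrow> ('i \<Rightarrow> complex) \<Rightarrow> ('j \<Rightarrow> complex) \<Rightarrow> ('j \<Rightarrow> complex)" where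
  "partial_A A a b = (\<lambda>j. \<Sum>\<^sub>\<infinity>i. cnj (a i) * A (tensor a b) (i, j))"

definition sep_eigen ::
  "(('i \<times> 'j \<Rightarrow> complex) \<Rightarrow> ('i \<times> 'j \<Rightarrow> complex)) \<Rightarrow> real \<Rightarrow> ('i \<Rightarrow> complex) \<Rightarrow> ('j \<Rightarrow> complex) \<Rightarrow> bool" where
  "sep_eigen A g a b \<longleftrightarrow>
     a \<in> l2 \<and> b \<in> l2 \<and> l2_norm a = 1 \<and> l2_norm b = 1 \<and>
     partial_B A b a = (\<lambda>i. complex_of_real g * a i) \<and>
     partial_A A a b = (\<lambda>j. complex_of_real g * b j)"

definition orthonormal_basis :: "('k \<Rightarrow> 'i \<Rightarrow> complex) \<Rightarrow> bool" where
  "orthonormal_basis e \<longleftrightarrow>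
     (\<forall>k. e k \<in> l2) \<and>
     (\<forall>k k'. l2_inner (e k) (e k') = (if k = k' then 1 else 0)) \<and>
     (\<forall>x\<in>l2. (\<forall>k. l2_inner (e k) x = 0) \<longrightarrow> x = 0)"

definition l2_sums :: "('k \<Rightarrow> 'i \<Rightarrow> complex) \<Rightarrow> 'k set \<Rightarrow> ('i \<Rightarrow> complex) \<Rightarrow> bool" where
  "l2_sums f S v \<longleftrightarrow> ((\<lambda>G. l2_norm (v - sum f G)) \<longlongrightarrow> 0) (finite_subsets_at_top S)"

end

theory Submission
  imports Defs
begin

text \<open>
  Write \<open>r = A|a,b\<rangle> - g|a,b\<rangle>\<close> for a solution \<open>g, |a,b\<rangle>\<close>. Computing the partial inner
  products by Fubini, the eigenvalue equations say exactly that
  \<open>\<langle>a',b|A|a,b\<rangle> = g\<langle>a'|a\<rangle>\<close> and \<open>\<langle>a,b'|A|a,b\<rangle> = g\<langle>b'|b\<rangle>\<close> for all \<open>a'\<close>, \<open>b'\<close>;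
  since \<open>\<langle>a'|a\<rangle>\<langle>b|b\<rangle> = \<langle>a'|a\<rangle>\<close>, the residual \<open>r\<close> is orthogonal to every \<open>|a',b\<rangle>\<close> and
  \<open>|a,b'\<rangle>\<close>. The products of two orthonormal bases form an orthonormal basis of the
  tensor product, and the expansion of \<open>r\<close> in it (which converges by Bessel's
  inequality and completeness) therefore only involves \<open>|a\<^sub>k,b\<^sub>l\<rangle>\<close> with \<open>k \<noteq> 0\<close>, \<open>l \<noteq> 0\<close>.
  For two solutions sharing \<open>b\<close>, hermiticity gives
  \<open>g\<^sub>1\<langle>a\<^sub>0|a\<^sub>1\<rangle> = \<langle>a\<^sub>0,b|A|a\<^sub>1,b\<rangle> = conj \<langle>a\<^sub>1,b|A|a\<^sub>0,b\<rangle> = g\<^sub>0\<langle>a\<^sub>0|a\<^sub>1\<rangle>\<close>.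
  Finally \<open>g = \<langle>a,b|A|a,b\<rangle>\<close>; if two normalised product vectors were proportional, the
  factor would be unimodular and cancel in this expectation value, forcing \<open>g\<^sub>1 = g\<^sub>0\<close>.
\<close>

section \<open>Square-summable functions\<close>

definition l2_sqnorm :: "('i \<Rightarrow> complex) \<Rightarrow> real" where
  "l2_sqnorm x = (\<Sum>\<^sub>\<infinity>i. (cmod (x i))^2)"

lemma in_l2D: "x \<in> l2 \<Longrightarrow> (\<lambda>i. (cmod (x i))^2) summable_on UNIV"
  by (simp add: l2_def)

lemma l2_sqnorm_nonneg: "l2_sqnorm x \<ge> 0"
  unfolding l2_sqnorm_def by (rule infsum_nonneg) auto

lemma l2_norm_eq_sqrt_sqnorm: "l2_norm x = sqrt (l2_sqnorm x)"
  unfolding l2_norm_def l2_sqnorm_def ..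

lemma in_l2_dominated:
  assumes "g summable_on UNIV" "\<And>i. (cmod (x i))^2 \<le> g i"
  shows "x \<in> l2"
proof -
  have "(\<lambda>i. norm ((cmod (x i))^2)) summable_on UNIV"
    by (rule Infinite_Sum.abs_summable_on_comparison_test'[OF assms(1)]) (use assms(2) in auto)
  then show ?thesis by (simp add: l2_def)
qed

lemma add_in_l2:
  assumes "x \<in> l2" "y \<in> l2"
  shows "x + y \<in> l2"
proof (rule in_l2_dominated)
  show "(\<lambda>i. 2 * (cmod (x i))^2 + 2 * (cmod (y i))^2) summable_on UNIV"
    using assms by (intro summable_on_add summable_on_cmult_right) (auto dest: in_l2D)
  fix i
  have "(cmod (x i + y i))^2 \<le> (cmod (x i) + cmod (y i))^2"
    by (simp add: power_mono norm_triangle_ineq)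
  also have "\<dots> \<le> 2 * (cmod (x i))^2 + 2 * (cmod (y i))^2"
    using sum_squares_bound[of "cmod (x i)" "cmod (y i)"] by (simp add: power2_eq_square algebra_simps)
  finally show "(cmod ((x + y) i))^2 \<le> 2 * (cmod (x i))^2 + 2 * (cmod (y i))^2" by simp
qed

lemma scale_in_l2: "x \<in> l2 \<Longrightarrow> (\<lambda>i. c * x i) \<in> l2"
  by (rule in_l2_dominated[where g="\<lambda>i. (cmod c)^2 * (cmod (x i))^2"])
     (auto intro: summable_on_cmult_right dest: in_l2D simp: norm_mult power_mult_distrib)

lemma diff_in_l2:
  assumes "x \<in> l2" "y \<in> l2"
  shows "x - y \<in> l2"
proof -
  have "x - y = x + (\<lambda>i. - 1 * y i)" by (simp add: fun_eq_iff)
  then show ?thesis using assms by (simp only: add_in_l2 scale_in_l2)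
qed

lemma zero_in_l2: "0 \<in> l2"
  by (simp add: l2_def)

lemma sum_in_l2: "(\<And>k. k \<in> G \<Longrightarrow> y k \<in> l2) \<Longrightarrow> sum y G \<in> l2"
  by (induct G rule: infinite_finite_induct) (auto intro: add_in_l2 zero_in_l2)

lemma sum_le_l2_sqnorm: "x \<in> l2 \<Longrightarrow> finite F \<Longrightarrow> (\<Sum>i\<in>F. (cmod (x i))^2) \<le> l2_sqnorm x"
  unfolding l2_sqnorm_def by (rule finite_sum_le_infsum) (auto dest: in_l2D)

lemma l2_inner_summable:
  assumes "x \<in> l2" "y \<in> l2"
  shows "(\<lambda>i. cnj (x i) * y i) summable_on UNIV"
proof (rule abs_summable_summable, rule Infinite_Sum.abs_summable_product)
  show "(\<lambda>i. norm (cnj (x i) * cnj (x i))) summable_on UNIV"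
    using in_l2D[OF assms(1)] by (simp add: norm_mult power2_eq_square)
  show "(\<lambda>i. norm (y i * y i)) summable_on UNIV"
    using in_l2D[OF assms(2)] by (simp add: norm_mult power2_eq_square)
qed

lemma l2_inner_cnj: "l2_inner x y = cnj (l2_inner y x)"
  unfolding l2_inner_def by (subst infsum_cnj[symmetric]) (simp add: mult.commute)

lemma l2_inner_add_right:
  assumes "x \<in> l2" "y \<in> l2" "z \<in> l2"
  shows "l2_inner x (y + z) = l2_inner x y + l2_inner x z"
  unfolding l2_inner_def plus_fun_apply distrib_left
  by (rule infsum_add) (use assms in \<open>auto intro: l2_inner_summable\<close>)

lemma l2_inner_scale_right: "l2_inner x (\<lambda>i. c * y i) = c * l2_inner x y"
  unfolding l2_inner_def by (simp add: infsum_cmult_right' mult.left_commute)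

lemma l2_inner_scale_left: "l2_inner (\<lambda>i. c * x i) y = cnj c * l2_inner x y"
  using l2_inner_scale_right[of y c x] by (metis complex_cnj_mult l2_inner_cnj)

lemma l2_inner_diff_right:
  assumes "x \<in> l2" "y \<in> l2" "z \<in> l2"
  shows "l2_inner x (y - z) = l2_inner x y - l2_inner x z"
proof -
  have "y - z = y + (\<lambda>i. - 1 * z i)" by (simp add: fun_eq_iff)
  then have "l2_inner x (y - z) = l2_inner x y + l2_inner x (\<lambda>i. - 1 * z i)"
    using assms by (simp only: l2_inner_add_right scale_in_l2)
  then show ?thesis using l2_inner_scale_right[of x "- 1" z] by simp
qed

lemma l2_inner_sum_right:
  assumes "x \<in> l2" "\<And>k. k \<in> G \<Longrightarrow> y k \<in> l2"
  shows "l2_inner x (sum y G) = (\<Sum>k\<in>G. l2_inner x (y k))"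
  using assms(2)
proof (induct G rule: infinite_finite_induct)
  case (insert k F)
  have "l2_inner x (sum y (insert k F)) = l2_inner x (y k + sum y F)"
    by (simp only: sum.insert[OF insert(1,2)])
  also have "\<dots> = l2_inner x (y k) + l2_inner x (sum y F)"
    by (rule l2_inner_add_right) (use assms(1) insert(4) in \<open>auto intro: sum_in_l2\<close>)
  also have "\<dots> = l2_inner x (y k) + (\<Sum>k\<in>F. l2_inner x (y k))"
    using insert(3,4) by simp
  finally show ?case by (simp only: sum.insert[OF insert(1,2)])
qed (simp_all add: l2_inner_def)

lemma l2_inner_self:
  assumes "x \<in> l2"
  shows "l2_inner x x = complex_of_real (l2_sqnorm x)"
proof -
  have "((\<lambda>i. complex_of_real ((cmod (x i))^2)) has_sum complex_of_real (l2_sqnorm x)) UNIV"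
    using in_l2D[OF assms] unfolding l2_sqnorm_def by (intro has_sum_of_real) simp
  moreover have "cnj (x i) * x i = complex_of_real ((cmod (x i))^2)" for i
    by (metis complex_norm_square mult.commute)
  ultimately show ?thesis
    unfolding l2_inner_def by (simp only: infsumI)
qed

lemma unit_vector_l2:
  fixes x :: 'x
  defines "\<delta> \<equiv> \<lambda>i. if i = x then 1 else 0 :: complex"
  shows "\<delta> \<in> l2" and "l2_inner u \<delta> = cnj (u x)"
proof -
  have "((\<lambda>i. (cmod (\<delta> i))^2) has_sum 1) UNIV"
    using has_sum_finite[of "{x}" "\<lambda>_. 1 :: real"]
    by (subst has_sum_cong_neutral[where T="{x}" and g="\<lambda>_. 1"]) (auto simp: \<delta>_def)
  then show "\<delta> \<in> l2"
    by (auto simp: l2_def summable_on_def)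
  have "((\<lambda>i. cnj (u i) * \<delta> i) has_sum cnj (u x)) UNIV"
    using has_sum_finite[of "{x}" "\<lambda>_. cnj (u x)"]
    by (subst has_sum_cong_neutral[where T="{x}" and g="\<lambda>_. cnj (u x)"]) (auto simp: \<delta>_def)
  then show "l2_inner u \<delta> = cnj (u x)"
    by (simp add: l2_inner_def infsumI)
qed

section \<open>Orthonormal expansions\<close>

definition lincomb :: "('k \<Rightarrow> 'x \<Rightarrow> complex) \<Rightarrow> ('k \<Rightarrow> complex) \<Rightarrow> 'k set \<Rightarrow> 'x \<Rightarrow> complex" where
  "lincomb e c G = (\<Sum>k\<in>G. (\<lambda>x. c k * e k x))"

lemma lincomb_apply: "lincomb e c G x = (\<Sum>k\<in>G. c k * e k x)"
  unfolding lincomb_def by (induct G rule: infinite_finite_induct) auto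

lemma has_sum_tail_tendsto_0:
  fixes f :: "'a \<Rightarrow> 'b :: {topological_ab_group_add, t2_space}"
  assumes "(f has_sum T) S"
  shows "((\<lambda>G. T - sum f G) \<longlongrightarrow> 0) (finite_subsets_at_top S)"
  using tendsto_diff[OF tendsto_const[of T] assms[unfolded has_sum_def]] by simp

locale orthonormal_system =
  fixes e :: "'k \<Rightarrow> 'x \<Rightarrow> complex"
  assumes in_l2: "e k \<in> l2"
    and inner_eq: "l2_inner (e k) (e k') = (if k = k' then 1 else 0)"
begin

lemma lincomb_in_l2: "lincomb e c G \<in> l2"
  unfolding lincomb_def by (rule sum_in_l2) (use in_l2 in \<open>auto intro: scale_in_l2\<close>)

lemma inner_lincomb:
  assumes "finite G"
  shows "l2_inner (e j) (lincomb e c G) = (if j \<in> G then c j else 0)"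
proof -
  have "l2_inner (e j) (lincomb e c G) = (\<Sum>k\<in>G. c k * l2_inner (e j) (e k))"
    unfolding lincomb_def using in_l2
    by (simp add: l2_inner_sum_right scale_in_l2 l2_inner_scale_right)
  also have "\<dots> = (\<Sum>k\<in>G. if j = k then c k else 0)"
    by (rule sum.cong) (auto simp: inner_eq)
  also have "\<dots> = (if j \<in> G then c j else 0)"
    using assms by (simp add: sum.delta)
  finally show ?thesis .
qed

lemma inner_lincomb_left:
  assumes "finite G" "y \<in> l2"
  shows "l2_inner (lincomb e c G) y = (\<Sum>k\<in>G. cnj (c k) * l2_inner (e k) y)"
proof -
  have "l2_inner y (lincomb e c G) = (\<Sum>k\<in>G. c k * l2_inner y (e k))"
    unfolding lincomb_def using assms in_l2
    by (simp add: l2_inner_sum_right scale_in_l2 l2_inner_scale_right)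
  then show ?thesis
    by (subst l2_inner_cnj) (simp add: l2_inner_cnj[of y])
qed

lemma l2_sqnorm_lincomb:
  assumes "finite G"
  shows "l2_sqnorm (lincomb e c G) = (\<Sum>k\<in>G. (cmod (c k))^2)"
proof -
  have "complex_of_real (l2_sqnorm (lincomb e c G)) = (\<Sum>k\<in>G. cnj (c k) * c k)"
    using assms lincomb_in_l2
    by (simp add: l2_inner_self[symmetric] inner_lincomb_left inner_lincomb)
  also have "\<dots> = complex_of_real (\<Sum>k\<in>G. (cmod (c k))^2)"
    by (simp only: of_real_sum complex_norm_square mult.commute)
  finally show ?thesis by (simp only: of_real_eq_iff)
qed

lemma l2_sqnorm_diff_projection:
  assumes G: "finite G" and y: "y \<in> l2"
  defines "c \<equiv> \<lambda>k. l2_inner (e k) y"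
  shows "l2_sqnorm (y - lincomb e c G) = l2_sqnorm y - (\<Sum>k\<in>G. (cmod (c k))^2)"
proof -
  let ?u = "lincomb e c G" and ?r = "y - lincomb e c G"
  have r: "?r \<in> l2" using y lincomb_in_l2 by (rule diff_in_l2)
  have "l2_inner (e k) ?r = 0" if "k \<in> G" for k
    using that G y by (simp add: l2_inner_diff_right in_l2 lincomb_in_l2 inner_lincomb c_def)
  then have "l2_inner ?u ?r = 0"
    using G r by (simp add: inner_lincomb_left)
  then have ru: "l2_inner ?r ?u = 0"
    by (subst l2_inner_cnj) simp
  have "l2_inner ?u y = (\<Sum>k\<in>G. cnj (c k) * c k)"
    using G y by (simp add: inner_lincomb_left c_def)
  also have "\<dots> = complex_of_real (\<Sum>k\<in>G. (cmod (c k))^2)"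
    by (simp only: of_real_sum complex_norm_square mult.commute)
  finally have uy: "l2_inner ?u y = complex_of_real (\<Sum>k\<in>G. (cmod (c k))^2)" .
  have "complex_of_real (l2_sqnorm ?r) = l2_inner ?r y - l2_inner ?r ?u"
    using l2_inner_self[OF r] l2_inner_diff_right[OF r y lincomb_in_l2] by simp
  also have "\<dots> = complex_of_real (l2_sqnorm y) - l2_inner ?u y"
    using ru l2_inner_cnj[of ?r y] l2_inner_cnj[of ?u y] l2_inner_self[OF y]
      l2_inner_diff_right[OF y y lincomb_in_l2] by simp
  finally show ?thesis
    unfolding uy by (simp only: of_real_diff[symmetric] of_real_eq_iff)
qed

lemma bessel_inequality:
  assumes "finite G" "y \<in> l2"
  shows "(\<Sum>k\<in>G. (cmod (l2_inner (e k) y))^2) \<le> l2_sqnorm y"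
  using l2_sqnorm_diff_projection[OF assms] l2_sqnorm_nonneg by (metis diff_ge_0_iff_ge)

lemma inner_sq_le_l2_sqnorm: "y \<in> l2 \<Longrightarrow> (cmod (l2_inner (e k) y))^2 \<le> l2_sqnorm y"
  using bessel_inequality[of "{k}" y] by simp

lemma coeff_sq_summable: "y \<in> l2 \<Longrightarrow> (\<lambda>k. (cmod (l2_inner (e k) y))^2) summable_on S"
  by (rule nonneg_bdd_above_summable_on)
     (auto intro!: bdd_aboveI[where M="l2_sqnorm y"] bessel_inequality)

lemma coord_sq_summable: "(\<lambda>k. (cmod (e k x))^2) summable_on S"
  using coeff_sq_summable[OF unit_vector_l2(1), of x S] by (simp add: unit_vector_l2(2))

lemma lincomb_summable_at:
  assumes "(\<lambda>k. (cmod (c k))^2) summable_on S"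
  shows "(\<lambda>k. c k * e k x) summable_on S"
proof (rule abs_summable_summable, rule Infinite_Sum.abs_summable_product)
  show "(\<lambda>k. norm (c k * c k)) summable_on S"
    using assms by (simp add: norm_mult power2_eq_square)
  show "(\<lambda>k. norm (e k x * e k x)) summable_on S"
    using coord_sq_summable[of x S] by (simp add: norm_mult power2_eq_square)
qed

text \<open>The partial sums converge pointwise, and on finitely many coordinates the bound
  by Pythagoras for the difference of two partial sums survives the limit.\<close>

lemma lincomb_tail_coords:
  assumes summ: "(\<lambda>k. (cmod (c k))^2) summable_on S"
    and G: "finite G" "G \<subseteq> S" and F: "finite F"
  shows "(\<Sum>x\<in>F. (cmod ((\<Sum>\<^sub>\<infinity>k\<in>S. c k * e k x) - lincomb e c G x))^2)
           \<le> (\<Sum>\<^sub>\<infinity>k\<in>S. (cmod (c k))^2) - (\<Sum>k\<in>G. (cmod (c k))^2)"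
proof (rule tendsto_upperbound)
  show "((\<lambda>H. \<Sum>x\<in>F. (cmod (lincomb e c H x - lincomb e c G x))^2)
          \<longlongrightarrow> (\<Sum>x\<in>F. (cmod ((\<Sum>\<^sub>\<infinity>k\<in>S. c k * e k x) - lincomb e c G x))^2))
          (finite_subsets_at_top S)"
    unfolding lincomb_apply
    by (intro tendsto_intros infsum_tendsto lincomb_summable_at[OF summ])
  show "\<forall>\<^sub>F H in finite_subsets_at_top S. (\<Sum>x\<in>F. (cmod (lincomb e c H x - lincomb e c G x))^2)
          \<le> (\<Sum>\<^sub>\<infinity>k\<in>S. (cmod (c k))^2) - (\<Sum>k\<in>G. (cmod (c k))^2)"
    unfolding eventually_finite_subsets_at_top
  proof (intro exI[of _ G] conjI allI impI)
    fix H assume H: "finite H \<and> G \<subseteq> H \<and> H \<subseteq> S"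
    have "lincomb e c H - lincomb e c G = lincomb e c (H - G)"
      using H G unfolding lincomb_def by (simp add: sum.subset_diff[of G H])
    then have "(\<Sum>x\<in>F. (cmod (lincomb e c H x - lincomb e c G x))^2)
        = (\<Sum>x\<in>F. (cmod (lincomb e c (H - G) x))^2)"
      by (simp add: fun_diff_def fun_eq_iff)
    also have "\<dots> \<le> l2_sqnorm (lincomb e c (H - G))"
      by (rule sum_le_l2_sqnorm[OF lincomb_in_l2 F])
    also have "\<dots> = (\<Sum>k\<in>H. (cmod (c k))^2) - (\<Sum>k\<in>G. (cmod (c k))^2)"
      using H by (simp add: l2_sqnorm_lincomb sum_diff)
    also have "\<dots> \<le> (\<Sum>\<^sub>\<infinity>k\<in>S. (cmod (c k))^2) - (\<Sum>k\<in>G. (cmod (c k))^2)"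
      using H finite_sum_le_infsum[OF summ, of H] by simp
    finally show "(\<Sum>x\<in>F. (cmod (lincomb e c H x - lincomb e c G x))^2)
        \<le> (\<Sum>\<^sub>\<infinity>k\<in>S. (cmod (c k))^2) - (\<Sum>k\<in>G. (cmod (c k))^2)" .
  qed (use G in auto)
qed simp

lemma lincomb_tail:
  assumes summ: "(\<lambda>k. (cmod (c k))^2) summable_on S" and G: "finite G" "G \<subseteq> S"
  defines "f \<equiv> \<lambda>x. \<Sum>\<^sub>\<infinity>k\<in>S. c k * e k x"
  shows "f - lincomb e c G \<in> l2"
    and "l2_sqnorm (f - lincomb e c G) \<le> (\<Sum>\<^sub>\<infinity>k\<in>S. (cmod (c k))^2) - (\<Sum>k\<in>G. (cmod (c k))^2)"
proof -
  define t where "t = (\<Sum>\<^sub>\<infinity>k\<in>S. (cmod (c k))^2) - (\<Sum>k\<in>G. (cmod (c k))^2)"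
  have coords: "(\<Sum>x\<in>F. (cmod (f x - lincomb e c G x))^2) \<le> t" if "finite F" for F
    using lincomb_tail_coords[OF summ G that] by (simp add: f_def t_def)
  have sq: "(\<lambda>x. (cmod (f x - lincomb e c G x))^2) summable_on UNIV"
    by (rule nonneg_bdd_above_summable_on) (auto intro!: bdd_aboveI[where M=t] coords)
  then show "f - lincomb e c G \<in> l2"
    by (simp add: l2_def fun_diff_def)
  show "l2_sqnorm (f - lincomb e c G) \<le> (\<Sum>\<^sub>\<infinity>k\<in>S. (cmod (c k))^2) - (\<Sum>k\<in>G. (cmod (c k))^2)"
    unfolding l2_sqnorm_def fun_diff_def t_def[symmetric]
    by (rule infsum_le_finite_sums[OF sq coords])
qed

lemma expansion_eq:
  assumes complete: "\<And>x. x \<in> l2 \<Longrightarrow> (\<forall>k. l2_inner (e k) x = 0) \<Longrightarrow> x = 0"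
    and v: "v \<in> l2" and vanish: "\<And>k. k \<notin> S \<Longrightarrow> l2_inner (e k) v = 0"
  shows "v = (\<lambda>x. \<Sum>\<^sub>\<infinity>k\<in>S. l2_inner (e k) v * e k x)"
proof -
  define c where "c k = l2_inner (e k) v" for k
  define f where "f = (\<lambda>x. \<Sum>\<^sub>\<infinity>k\<in>S. c k * e k x)"
  define tail where "tail G = (\<Sum>\<^sub>\<infinity>k\<in>S. (cmod (c k))^2) - (\<Sum>k\<in>G. (cmod (c k))^2)" for G
  have summ: "(\<lambda>k. (cmod (c k))^2) summable_on S"
    unfolding c_def by (rule coeff_sq_summable[OF v])
  note tail_bound = lincomb_tail[OF summ, folded f_def tail_def]
  have f: "f \<in> l2"
    using tail_bound(1)[of "{}"] by (simp add: lincomb_def)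
  have bound: "(cmod (l2_inner (e j) (v - f)))^2 \<le> tail G"
    if G: "finite G" "G \<subseteq> S" "{j} \<inter> S \<subseteq> G" for j G
  proof -
    have r: "f - lincomb e c G \<in> l2"
      using G tail_bound(1) by blast
    have "j \<in> G \<or> c j = 0"
      using G(3) vanish[of j] by (auto simp: c_def)
    then have "l2_inner (e j) (v - lincomb e c G) = 0"
      by (auto simp: l2_inner_diff_right[OF in_l2 v lincomb_in_l2] inner_lincomb[OF G(1)] c_def)
    moreover have "l2_inner (e j) (v - f)
        = l2_inner (e j) (v - lincomb e c G) - l2_inner (e j) (f - lincomb e c G)"
      using l2_inner_diff_right[OF in_l2[of j] diff_in_l2[OF v lincomb_in_l2[of c G]] r] by simp
    ultimately have "(cmod (l2_inner (e j) (v - f)))^2 = (cmod (l2_inner (e j) (f - lincomb e c G)))^2"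
      by simp
    also have "\<dots> \<le> l2_sqnorm (f - lincomb e c G)"
      by (rule inner_sq_le_l2_sqnorm[OF r])
    also have "\<dots> \<le> tail G"
      using G tail_bound(2) by blast
    finally show ?thesis .
  qed
  have "(cmod (l2_inner (e j) (v - f)))^2 \<le> 0" for j
  proof (rule tendsto_lowerbound)
    show "(tail \<longlongrightarrow> 0) (finite_subsets_at_top S)"
      unfolding tail_def[abs_def] using summ by (intro has_sum_tail_tendsto_0) simp
    show "\<forall>\<^sub>F G in finite_subsets_at_top S. (cmod (l2_inner (e j) (v - f)))^2 \<le> tail G"
      unfolding eventually_finite_subsets_at_top using bound by (intro exI[of _ "{j} \<inter> S"]) auto
  qed simp
  then have "\<forall>j. l2_inner (e j) (v - f) = 0"
    by simp
  then have "v - f = 0"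
    using complete diff_in_l2[OF v f] by blast
  then show ?thesis
    unfolding right_minus_eq f_def c_def .
qed

lemma l2_sums_expansion:
  assumes complete: "\<And>x. x \<in> l2 \<Longrightarrow> (\<forall>k. l2_inner (e k) x = 0) \<Longrightarrow> x = 0"
    and v: "v \<in> l2" and vanish: "\<And>k. k \<notin> S \<Longrightarrow> l2_inner (e k) v = 0"
  shows "l2_sums (\<lambda>k x. l2_inner (e k) v * e k x) S v"
proof -
  define c where "c k = l2_inner (e k) v" for k
  define tail where "tail G = (\<Sum>\<^sub>\<infinity>k\<in>S. (cmod (c k))^2) - (\<Sum>k\<in>G. (cmod (c k))^2)" for G
  have summ: "(\<lambda>k. (cmod (c k))^2) summable_on S"
    unfolding c_def by (rule coeff_sq_summable[OF v])
  have v_eq: "v = (\<lambda>x. \<Sum>\<^sub>\<infinity>k\<in>S. c k * e k x)"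
    unfolding c_def by (rule expansion_eq[OF assms])
  have partial_sum: "sum (\<lambda>k x. l2_inner (e k) v * e k x) G = lincomb e c G" for G
    by (simp add: lincomb_def c_def)
  show ?thesis
    unfolding l2_sums_def partial_sum
  proof (rule tendsto_sandwich[where f="\<lambda>_. 0" and h="\<lambda>G. sqrt (tail G)"])
    show "\<forall>\<^sub>F G in finite_subsets_at_top S. 0 \<le> l2_norm (v - lincomb e c G)"
      by (simp add: l2_norm_eq_sqrt_sqnorm l2_sqnorm_nonneg)
    show "\<forall>\<^sub>F G in finite_subsets_at_top S. l2_norm (v - lincomb e c G) \<le> sqrt (tail G)"
    proof (rule eventually_finite_subsets_at_top_weakI)
      fix G assume "finite G" "G \<subseteq> S"
      from lincomb_tail(2)[OF summ this] have "l2_sqnorm (v - lincomb e c G) \<le> tail G"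
        unfolding tail_def v_eq[symmetric] .
      then show "l2_norm (v - lincomb e c G) \<le> sqrt (tail G)"
        by (simp add: l2_norm_eq_sqrt_sqnorm)
    qed
    have "((\<lambda>k. (cmod (c k))^2) has_sum (\<Sum>\<^sub>\<infinity>k\<in>S. (cmod (c k))^2)) S"
      using summ by simp
    from tendsto_real_sqrt[OF has_sum_tail_tendsto_0[OF this]]
    show "((\<lambda>G. sqrt (tail G)) \<longlongrightarrow> 0) (finite_subsets_at_top S)"
      by (simp add: tail_def)
  qed simp
qed

end

lemma orthonormal_system_basis: "orthonormal_basis e \<Longrightarrow> orthonormal_system e"
  unfolding orthonormal_basis_def by unfold_locales auto

lemma orthonormal_basis_complete:
  "orthonormal_basis e \<Longrightarrow> x \<in> l2 \<Longrightarrow> (\<And>k. l2_inner (e k) x = 0) \<Longrightarrow> x = 0"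
  unfolding orthonormal_basis_def by blast

lemma orthonormal_basis_l2_sums:
  assumes "orthonormal_basis e" "v \<in> l2" "\<And>k. k \<notin> S \<Longrightarrow> l2_inner (e k) v = 0"
  shows "l2_sums (\<lambda>k x. l2_inner (e k) v * e k x) S v"
proof -
  interpret orthonormal_system e
    using assms(1) by (rule orthonormal_system_basis)
  show ?thesis
    by (rule l2_sums_expansion[OF _ assms(2,3)]) (auto intro: orthonormal_basis_complete[OF assms(1)])
qed

section \<open>Product vectors\<close>

lemma tensor_apply [simp]: "tensor a b (i, j) = a i * b j"
  by (simp add: tensor_def)

lemma tensor_in_l2:
  assumes "a \<in> l2" "b \<in> l2"
  shows "tensor a b \<in> l2"
proof -
  have "((\<lambda>j. (cmod (b j))^2) has_sum l2_sqnorm b) UNIV"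
    using in_l2D[OF assms(2)] by (simp add: l2_sqnorm_def)
  then have "((\<lambda>j. (cmod (tensor a b (i, j)))^2) has_sum (cmod (a i))^2 * l2_sqnorm b) UNIV" for i
    using has_sum_cmult_right[of _ _ _ "(cmod (a i))^2"] by (simp add: norm_mult power_mult_distrib)
  moreover have "(\<lambda>i. (cmod (a i))^2 * l2_sqnorm b) summable_on UNIV"
    using in_l2D[OF assms(1)] by (rule summable_on_cmult_left)
  ultimately have "(\<lambda>p. (cmod (tensor a b p))^2) summable_on UNIV \<times> UNIV"
    by (intro summable_on_SigmaI) auto
  then show ?thesis by (simp add: l2_def)
qed

lemma l2_inner_tensor_iterated:
  assumes "a \<in> l2" "b \<in> l2" "w \<in> l2"
  shows "l2_inner (tensor a b) w = (\<Sum>\<^sub>\<infinity>i. cnj (a i) * (\<Sum>\<^sub>\<infinity>j. cnj (b j) * w (i, j)))"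
    and "l2_inner (tensor a b) w = (\<Sum>\<^sub>\<infinity>j. cnj (b j) * (\<Sum>\<^sub>\<infinity>i. cnj (a i) * w (i, j)))"
proof -
  define h where "h p = cnj (tensor a b p) * w p" for p
  have h: "h summable_on UNIV \<times> UNIV"
    unfolding h_def using l2_inner_summable[OF tensor_in_l2[OF assms(1,2)] assms(3)] by simp
  have inner_h: "l2_inner (tensor a b) w = (\<Sum>\<^sub>\<infinity>i. \<Sum>\<^sub>\<infinity>j. h (i, j))"
    unfolding l2_inner_def h_def[symmetric] using infsum_Sigma_banach[OF h] by simp
  then show "l2_inner (tensor a b) w = (\<Sum>\<^sub>\<infinity>i. cnj (a i) * (\<Sum>\<^sub>\<infinity>j. cnj (b j) * w (i, j)))"
    by (simp add: h_def infsum_cmult_right' mult.assoc)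
  have "(\<Sum>\<^sub>\<infinity>i. \<Sum>\<^sub>\<infinity>j. h (i, j)) = (\<Sum>\<^sub>\<infinity>j. \<Sum>\<^sub>\<infinity>i. h (i, j))"
    using infsum_swap_banach[of "\<lambda>i j. h (i, j)"] h by simp
  moreover have "h (i, j) = cnj (b j) * (cnj (a i) * w (i, j))" for i j
    by (simp add: h_def)
  ultimately show "l2_inner (tensor a b) w = (\<Sum>\<^sub>\<infinity>j. cnj (b j) * (\<Sum>\<^sub>\<infinity>i. cnj (a i) * w (i, j)))"
    unfolding inner_h by (simp add: infsum_cmult_right')
qed

lemma l2_inner_tensor_partial_left:
  assumes "a \<in> l2" "b \<in> l2" "w \<in> l2"
    and "\<And>i. (\<Sum>\<^sub>\<infinity>j. cnj (b j) * w (i, j)) = c * a' i"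
  shows "l2_inner (tensor a b) w = c * l2_inner a a'"
  using l2_inner_tensor_iterated(1)[OF assms(1-3)] l2_inner_scale_right[of a c a']
  by (simp add: assms(4) l2_inner_def)

lemma l2_inner_tensor_partial_right:
  assumes "a \<in> l2" "b \<in> l2" "w \<in> l2"
    and "\<And>j. (\<Sum>\<^sub>\<infinity>i. cnj (a i) * w (i, j)) = c * b' j"
  shows "l2_inner (tensor a b) w = c * l2_inner b b'"
  using l2_inner_tensor_iterated(2)[OF assms(1-3)] l2_inner_scale_right[of b c b']
  by (simp add: assms(4) l2_inner_def)

lemma l2_inner_tensor_tensor:
  assumes "a \<in> l2" "b \<in> l2" "a' \<in> l2" "b' \<in> l2"
  shows "l2_inner (tensor a b) (tensor a' b') = l2_inner a a' * l2_inner b b'"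
proof -
  have "(\<Sum>\<^sub>\<infinity>j. cnj (b j) * tensor a' b' (i, j)) = l2_inner b b' * a' i" for i
    by (simp add: l2_inner_def infsum_cmult_right' mult_ac flip: infsum_cmult_right')
  from l2_inner_tensor_partial_left[OF assms(1,2) tensor_in_l2[OF assms(3,4)] this]
  show ?thesis by simp
qed

lemma l2_sq_summable_on_Sigma:
  "w \<in> l2 \<Longrightarrow> (\<lambda>(i, j). (cmod (w (i, j)))^2) summable_on UNIV \<times> UNIV"
  using in_l2D[of w] by (simp add: case_prod_unfold)

lemma l2_row_in_l2: "w \<in> l2 \<Longrightarrow> (\<lambda>j. w (i, j)) \<in> l2"
  using summable_on_SigmaD1[OF l2_sq_summable_on_Sigma, of w i] by (simp add: l2_def)

lemma l2_row_sqnorm_summable: "w \<in> l2 \<Longrightarrow> (\<lambda>i. l2_sqnorm (\<lambda>j. w (i, j))) summable_on UNIV"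
  using summable_on_SigmaD[OF l2_sq_summable_on_Sigma, of w] l2_row_in_l2[of w]
  by (simp add: l2_sqnorm_def l2_def)

lemma orthonormal_basis_tensor:
  fixes ea :: "'k \<Rightarrow> 'i \<Rightarrow> complex" and eb :: "'l \<Rightarrow> 'j \<Rightarrow> complex"
  assumes ea: "orthonormal_basis ea" and eb: "orthonormal_basis eb"
  shows "orthonormal_basis (\<lambda>(k, l). tensor (ea k) (eb l))"
proof -
  interpret onb_a: orthonormal_system ea using ea by (rule orthonormal_system_basis)
  interpret onb_b: orthonormal_system eb using eb by (rule orthonormal_system_basis)
  have "w = 0" if w: "w \<in> l2" and orth: "\<And>k l. l2_inner (tensor (ea k) (eb l)) w = 0" for w
  proof -
    define u where "u l i = l2_inner (eb l) (\<lambda>j. w (i, j))" for l i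
    have "u l = 0" for l
    proof (rule orthonormal_basis_complete[OF ea])
      show "u l \<in> l2"
        by (rule in_l2_dominated[OF l2_row_sqnorm_summable[OF w]])
           (simp add: u_def onb_b.inner_sq_le_l2_sqnorm l2_row_in_l2[OF w])
      show "l2_inner (ea k) (u l) = 0" for k
        using orth[of k l] l2_inner_tensor_iterated(1)[OF onb_a.in_l2 onb_b.in_l2 w]
        by (simp add: l2_inner_def u_def)
    qed
    then have "(\<lambda>j. w (i, j)) = 0" for i
      using orthonormal_basis_complete[OF eb l2_row_in_l2[OF w]] by (simp add: u_def fun_eq_iff)
    then show "w = 0" by (auto simp: fun_eq_iff)
  qed
  then show ?thesis
    unfolding orthonormal_basis_def
    by (auto simp: tensor_in_l2 onb_a.in_l2 onb_b.in_l2 l2_inner_tensor_tensor onb_a.inner_eq onb_b.inner_eq)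
qed

section \<open>Separability eigenvalue equations\<close>

lemma bounded_op_in_l2: "bounded_op A \<Longrightarrow> x \<in> l2 \<Longrightarrow> A x \<in> l2"
  unfolding bounded_op_def by blast

lemma bounded_op_scale: "bounded_op A \<Longrightarrow> x \<in> l2 \<Longrightarrow> A (\<lambda>i. c * x i) = (\<lambda>i. c * A x i)"
  unfolding bounded_op_def by blast

lemma hermitian_op_bounded: "hermitian_op A \<Longrightarrow> bounded_op A"
  unfolding hermitian_op_def by blast

lemma hermitian_op_inner_swap:
  assumes "hermitian_op A" "x \<in> l2" "y \<in> l2"
  shows "l2_inner x (A y) = cnj (l2_inner y (A x))"
proof -
  have "l2_inner (A x) y = l2_inner x (A y)"
    using assms unfolding hermitian_op_def by blast
  then show ?thesis
    by (metis l2_inner_cnj)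
qed

lemma sep_eigenD:
  assumes "sep_eigen A g a b"
  shows "a \<in> l2" "b \<in> l2" "l2_inner a a = 1" "l2_inner b b = 1"
    "\<And>i. (\<Sum>\<^sub>\<infinity>j. cnj (b j) * A (tensor a b) (i, j)) = complex_of_real g * a i"
    "\<And>j. (\<Sum>\<^sub>\<infinity>i. cnj (a i) * A (tensor a b) (i, j)) = complex_of_real g * b j"
proof -
  have "a \<in> l2" "b \<in> l2" "l2_sqnorm a = 1" "l2_sqnorm b = 1"
    using assms by (auto simp: sep_eigen_def l2_norm_eq_sqrt_sqnorm)
  then show "a \<in> l2" "b \<in> l2" "l2_inner a a = 1" "l2_inner b b = 1"
    by (simp_all add: l2_inner_self)
  show "(\<Sum>\<^sub>\<infinity>j. cnj (b j) * A (tensor a b) (i, j)) = complex_of_real g * a i"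
    "(\<Sum>\<^sub>\<infinity>i. cnj (a i) * A (tensor a b) (i, j)) = complex_of_real g * b j" for i j
    using assms by (simp_all add: sep_eigen_def partial_A_def partial_B_def fun_eq_iff)
qed

lemma sep_eigen_inner_left:
  assumes "bounded_op A" "sep_eigen A g a b" "a' \<in> l2"
  shows "l2_inner (tensor a' b) (A (tensor a b)) = complex_of_real g * l2_inner a' a"
proof -
  note ab = sep_eigenD[OF assms(2)]
  show ?thesis
    by (rule l2_inner_tensor_partial_left[OF assms(3) ab(2) _ ab(5)])
       (rule bounded_op_in_l2[OF assms(1) tensor_in_l2[OF ab(1,2)]])
qed

lemma sep_eigen_inner_right:
  assumes "bounded_op A" "sep_eigen A g a b" "b' \<in> l2"
  shows "l2_inner (tensor a b') (A (tensor a b)) = complex_of_real g * l2_inner b' b"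
proof -
  note ab = sep_eigenD[OF assms(2)]
  show ?thesis
    by (rule l2_inner_tensor_partial_right[OF ab(1) assms(3) _ ab(6)])
       (rule bounded_op_in_l2[OF assms(1) tensor_in_l2[OF ab(1,2)]])
qed

lemma sep_eigen_expectation:
  assumes "bounded_op A" "sep_eigen A g a b"
  shows "l2_inner (tensor a b) (A (tensor a b)) = complex_of_real g"
  using sep_eigen_inner_left[OF assms sep_eigenD(1)[OF assms(2)]] sep_eigenD(3)[OF assms(2)]
  by simp

lemma sep_eigen_tensor_unit:
  assumes "sep_eigen A g a b"
  shows "tensor a b \<in> l2" "l2_inner (tensor a b) (tensor a b) = 1"
  using sep_eigenD[OF assms] by (simp_all add: tensor_in_l2 l2_inner_tensor_tensor)

lemma sep_eigen_residual_orthogonal: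
  assumes A: "bounded_op A" and sol: "sep_eigen A g a b"
  defines "r \<equiv> A (tensor a b) - (\<lambda>x. complex_of_real g * tensor a b x)"
  shows "a' \<in> l2 \<Longrightarrow> l2_inner (tensor a' b) r = 0" and "b' \<in> l2 \<Longrightarrow> l2_inner (tensor a b') r = 0"
proof -
  note ab = sep_eigenD[OF sol]
  have t: "tensor a b \<in> l2" by (rule tensor_in_l2[OF ab(1,2)])
  have "l2_inner u r = l2_inner u (A (tensor a b)) - complex_of_real g * l2_inner u (tensor a b)"
    if "u \<in> l2" for u
    unfolding r_def using that t
    by (simp add: l2_inner_diff_right bounded_op_in_l2[OF A] scale_in_l2 l2_inner_scale_right)
  then show "a' \<in> l2 \<Longrightarrow> l2_inner (tensor a' b) r = 0" "b' \<in> l2 \<Longrightarrow> l2_inner (tensor a b') r = 0"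
    using ab
    by (simp_all add: tensor_in_l2 sep_eigen_inner_left[OF A sol] sep_eigen_inner_right[OF A sol]
        l2_inner_tensor_tensor)
qed

lemma sep_eigen_residual_expansion:
  fixes ea :: "'k \<Rightarrow> 'i \<Rightarrow> complex" and eb :: "'l \<Rightarrow> 'j \<Rightarrow> complex"
  assumes A: "bounded_op A" and sol: "sep_eigen A g a b"
    and ea: "orthonormal_basis ea" "ea k0 = a" and eb: "orthonormal_basis eb" "eb l0 = b"
  defines "r \<equiv> A (tensor a b) - (\<lambda>x. complex_of_real g * tensor a b x)"
  shows "\<exists>\<psi>. l2_sums (\<lambda>(k, l) x. \<psi> k l * tensor (ea k) (eb l) x) ({k. k \<noteq> k0} \<times> {l. l \<noteq> l0}) r"
proof -
  interpret onb_a: orthonormal_system ea using ea(1) by (rule orthonormal_system_basis)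
  interpret onb_b: orthonormal_system eb using eb(1) by (rule orthonormal_system_basis)
  note ab = sep_eigenD[OF sol]
  have "r \<in> l2"
    unfolding r_def using tensor_in_l2[OF ab(1,2)]
    by (intro diff_in_l2 bounded_op_in_l2[OF A] scale_in_l2)
  moreover have "l2_inner (tensor (ea k) (eb l)) r = 0" if "k = k0 \<or> l = l0" for k l
    using that ea(2) eb(2) onb_a.in_l2 onb_b.in_l2 sep_eigen_residual_orthogonal[OF A sol, folded r_def]
    by auto
  ultimately have "l2_sums (\<lambda>p x. l2_inner ((\<lambda>(k, l). tensor (ea k) (eb l)) p) r
      * (\<lambda>(k, l). tensor (ea k) (eb l)) p x) ({k. k \<noteq> k0} \<times> {l. l \<noteq> l0}) r"
    by (intro orthonormal_basis_l2_sums orthonormal_basis_tensor ea(1) eb(1)) auto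
  moreover have "(\<lambda>p x. l2_inner ((\<lambda>(k, l). tensor (ea k) (eb l)) p) r
      * (\<lambda>(k, l). tensor (ea k) (eb l)) p x)
      = (\<lambda>(k, l) x. l2_inner (tensor (ea k) (eb l)) r * tensor (ea k) (eb l) x)"
    by (auto simp: fun_eq_iff)
  ultimately show ?thesis
    by (intro exI[of _ "\<lambda>k l. l2_inner (tensor (ea k) (eb l)) r"]) simp
qed

lemma sep_eigen_orthogonal_left:
  assumes herm: "hermitian_op A" and sol0: "sep_eigen A g0 a0 b" and sol1: "sep_eigen A g1 a1 b"
    and ne: "g1 \<noteq> g0"
  shows "l2_inner a0 a1 = 0"
proof -
  note A = hermitian_op_bounded[OF herm]
  note s0 = sep_eigenD[OF sol0] and s1 = sep_eigenD[OF sol1]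
  have "complex_of_real g1 * l2_inner a0 a1 = l2_inner (tensor a0 b) (A (tensor a1 b))"
    using sep_eigen_inner_left[OF A sol1 s0(1)] by simp
  also have "\<dots> = cnj (l2_inner (tensor a1 b) (A (tensor a0 b)))"
    by (rule hermitian_op_inner_swap[OF herm tensor_in_l2[OF s0(1,2)] tensor_in_l2[OF s1(1,2)]])
  also have "\<dots> = complex_of_real g0 * l2_inner a0 a1"
    using sep_eigen_inner_left[OF A sol0 s1(1)] by (simp add: l2_inner_cnj[of a0 a1])
  finally show ?thesis using ne by simp
qed

lemma sep_eigen_orthogonal_right:
  assumes herm: "hermitian_op A" and sol0: "sep_eigen A g0 a b0" and sol1: "sep_eigen A g1 a b1"
    and ne: "g1 \<noteq> g0"
  shows "l2_inner b0 b1 = 0"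
proof -
  note A = hermitian_op_bounded[OF herm]
  note s0 = sep_eigenD[OF sol0] and s1 = sep_eigenD[OF sol1]
  have "complex_of_real g1 * l2_inner b0 b1 = l2_inner (tensor a b0) (A (tensor a b1))"
    using sep_eigen_inner_right[OF A sol1 s0(2)] by simp
  also have "\<dots> = cnj (l2_inner (tensor a b1) (A (tensor a b0)))"
    by (rule hermitian_op_inner_swap[OF herm tensor_in_l2[OF s0(1,2)] tensor_in_l2[OF s1(1,2)]])
  also have "\<dots> = complex_of_real g0 * l2_inner b0 b1"
    using sep_eigen_inner_right[OF A sol0 s1(2)] by (simp add: l2_inner_cnj[of b0 b1])
  finally show ?thesis using ne by simp
qed

lemma sep_eigen_tensors_independent:
  assumes herm: "hermitian_op A" and sol0: "sep_eigen A g0 a0 b0" and sol1: "sep_eigen A g1 a1 b1"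
    and ne: "g1 \<noteq> g0" and dep: "(\<lambda>x. c * tensor a0 b0 x + d * tensor a1 b1 x) = 0"
  shows "c = 0 \<and> d = 0"
proof -
  note A = hermitian_op_bounded[OF herm]
  define t0 t1 where "t0 = tensor a0 b0" and "t1 = tensor a1 b1"
  note u0 = sep_eigen_tensor_unit[OF sol0, folded t0_def]
    and u1 = sep_eigen_tensor_unit[OF sol1, folded t1_def]
  have d: "d = 0"
  proof (rule ccontr)
    assume "d \<noteq> 0"
    define \<mu> where "\<mu> = - c / d"
    have t1_eq: "t1 = (\<lambda>x. \<mu> * t0 x)"
      using fun_cong[OF dep] \<open>d \<noteq> 0\<close>
      by (auto simp: fun_eq_iff \<mu>_def t0_def t1_def field_simps eq_neg_iff_add_eq_0)
    have unit: "cnj \<mu> * \<mu> = 1"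
      using u1(2) u0(2) by (simp add: t1_eq l2_inner_scale_left l2_inner_scale_right)
    have "complex_of_real g1 = l2_inner t1 (A t1)"
      unfolding t1_def by (rule sep_eigen_expectation[OF A sol1, symmetric])
    also have "\<dots> = cnj \<mu> * \<mu> * l2_inner t0 (A t0)"
      by (simp add: t1_eq bounded_op_scale[OF A u0(1)] l2_inner_scale_left l2_inner_scale_right)
    also have "\<dots> = complex_of_real g0"
      unfolding unit t0_def by (simp add: sep_eigen_expectation[OF A sol0])
    finally show False using ne by simp
  qed
  have "c = c * l2_inner t0 t0" using u0(2) by simp
  also have "\<dots> = l2_inner t0 (\<lambda>x. c * t0 x)" by (simp add: l2_inner_scale_right)
  also have "(\<lambda>x. c * t0 x) = 0" using dep d by (simp add: t0_def)
  finally show ?thesis using d by (simp add: l2_inner_def)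
qed

theorem proposition1:
  fixes A :: "('i \<times> 'j \<Rightarrow> complex) \<Rightarrow> ('i \<times> 'j \<Rightarrow> complex)"
    and g0 :: real and a0 :: "'i \<Rightarrow> complex" and b0 :: "'j \<Rightarrow> complex"
  assumes herm: "hermitian_op A"
    and sol0: "sep_eigen A g0 a0 b0"
  shows "(\<forall>(ea :: 'k \<Rightarrow> 'i \<Rightarrow> complex) (eb :: 'l \<Rightarrow> 'j \<Rightarrow> complex) k0 l0.
            orthonormal_basis ea \<and> orthonormal_basis eb \<and> ea k0 = a0 \<and> eb l0 = b0 \<longrightarrow>
            (\<exists>\<psi> :: 'k \<Rightarrow> 'l \<Rightarrow> complex.
               l2_sums (\<lambda>(k, l). (\<lambda>x. \<psi> k l * tensor (ea k) (eb l) x))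
                       ({k. k \<noteq> k0} \<times> {l. l \<noteq> l0})
                       (A (tensor a0 b0) - (\<lambda>x. complex_of_real g0 * tensor a0 b0 x))))
       \<and> (\<forall>g1 a1. g1 \<noteq> g0 \<and> sep_eigen A g1 a1 b0 \<longrightarrow> l2_inner a0 a1 = 0)
       \<and> (\<forall>g1 b1. g1 \<noteq> g0 \<and> sep_eigen A g1 a0 b1 \<longrightarrow> l2_inner b0 b1 = 0)
       \<and> (\<forall>g1 a1 b1. g1 \<noteq> g0 \<and> sep_eigen A g1 a1 b1 \<longrightarrow>
            (\<forall>c d :: complex.
               (\<lambda>x. c * tensor a0 b0 x + d * tensor a1 b1 x) = 0 \<longrightarrow> c = 0 \<and> d = 0))"
proof (intro conjI allI impI)
  fix ea :: "'k \<Rightarrow> 'i \<Rightarrow> complex" and eb :: "'l \<Rightarrow> 'j \<Rightarrow> complex" and k0 l0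
  assume "orthonormal_basis ea \<and> orthonormal_basis eb \<and> ea k0 = a0 \<and> eb l0 = b0"
  then show "\<exists>\<psi> :: 'k \<Rightarrow> 'l \<Rightarrow> complex.
      l2_sums (\<lambda>(k, l). (\<lambda>x. \<psi> k l * tensor (ea k) (eb l) x)) ({k. k \<noteq> k0} \<times> {l. l \<noteq> l0})
        (A (tensor a0 b0) - (\<lambda>x. complex_of_real g0 * tensor a0 b0 x))"
    by (intro sep_eigen_residual_expansion[OF hermitian_op_bounded[OF herm] sol0]) auto
next
  fix g1 a1
  assume "g1 \<noteq> g0 \<and> sep_eigen A g1 a1 b0"
  then show "l2_inner a0 a1 = 0"
    using sep_eigen_orthogonal_left[OF herm sol0] by blast
next
  fix g1 b1
  assume "g1 \<noteq> g0 \<and> sep_eigen A g1 a0 b1"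
  then show "l2_inner b0 b1 = 0"
    using sep_eigen_orthogonal_right[OF herm sol0] by blast
next
  fix g1 a1 b1 c d
  assume "g1 \<noteq> g0 \<and> sep_eigen A g1 a1 b1" and "(\<lambda>x. c * tensor a0 b0 x + d * tensor a1 b1 x) = 0"
  then show "c = 0" and "d = 0"
    using sep_eigen_tensors_independent[OF herm sol0] by blast+
qed

end
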